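(* The function $F^{(1)}$ satisfies, for $(u,v)\in\mathbb{D}^2$, $$uP_0(u)\frac{\partial F^{(1)}}{\partial u}(u,v)+v\left[\rho(1-q)-(1+\rho-v)(u-q)\right]\frac{\partial F^{(1)}}{\partial v}(u,v)+\left[u(u-1-\rho)+(u-q)(u+v)\right]F^{(1)}(u,v)+L^{(1)}(u,v)=0,$$ where $P_0(u)=(1-u)(\rho+q-u)$ and $$L^{(1)}(u,v)=L^{(1)}_0(u,v)+(u+v)E^{(1)}(v)-v(1+\rho-v)\frac{dE^{(1)}}{dv}(v),$$ $$L^{(1)}_0(u,v)=-\frac{v(1-uv)}{(1-u)^2(1-v)^2}=\sum_{b\ge1}k^{(1)}_b(u)v^b,\qquad k^{(1)}_b(u)=-\frac{u}{(1-u)^2}-\frac{b}{1-u}.$$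
   Context: Queueing model: an $M^{[X]}/M/1$ processor-sharing queue with Poisson batch arrivals of rate $\rho>0$, exponential job services of mean $1$, unit capacity shared equally among jobs present, all random quantities independent; geometric batch sizes $\mathbb{P}(B=b)=(1-q)q^{b-1}$, $q\in(0,1)$, $\rho+q<1$. For $n\ge0,b\ge1$, $\Omega_{n,b}$ is the sojourn time of a tagged batch (arrival to departure of its last job) given $n$ jobs present at its arrival and batch size $b$. $\mathbb{D}$ is the open unit disk. Define $E^{(1)}(u,v)=-\sum_{n\ge0}\sum_{b\ge1}\mathbb{E}(\Omega_{n,b})u^nv^b$ (the coefficient of $s$ in the expansion as $s\to0$ of $\sum_{n,b}\mathbb{E}(e^{-s\Omega_{n,b}})u^nv^b$), $E^{(1)}(v)=E^{(1)}(q,v)$, and $F^{(1)}(u,v)=\frac{E^{(1)}(u,v)-E^{(1)}(q,v)}{u-q}$ for $u\ne q$, $F^{(1)}(q,v)=\frac{\partial E^{(1)}}{\partial u}(q,v)$. *)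

theory Defs
  imports "HOL-Probability.Probability" "HOL-Analysis.Analysis"
begin

text \<open>Batch size B with P(B = b) = (1-q) q^(b-1), b >= 1.\<close>
definition batch_pmf :: "real \<Rightarrow> nat pmf" where
  "batch_pmf q = map_pmf Suc (geometric_pmf (1 - q))"

text \<open>Embedded jump chain of the state (m, k) seen by a tagged batch in the
  M^[X]/M/1 processor-sharing queue: m = other jobs present, k = remaining
  jobs of the tagged batch.  While k > 0 the total event rate is rho + 1
  (batch arrivals at rate rho; job completions at total rate 1, the completing
  job being uniform among the m + k present jobs).  k = 0 is absorbing
  (departure of the last job of the tagged batch).\<close>
definition ps_step :: "real \<Rightarrow> real \<Rightarrow> nat \<times> nat \<Rightarrow> (nat \<times> nat) pmf" where
  "ps_step rho q s = (case s of (m, k) \<Rightarrow>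
     if k = 0 then return_pmf (m, k)
     else bind_pmf (bernoulli_pmf (rho / (1 + rho))) (\<lambda>a.
       if a then map_pmf (\<lambda>b. (m + b, k)) (batch_pmf q)
       else map_pmf (\<lambda>t. if t then (m, k - 1) else (m - 1, k))
              (bernoulli_pmf (real k / real (m + k)))))"

primrec ps_chain :: "real \<Rightarrow> real \<Rightarrow> nat \<Rightarrow> nat \<times> nat \<Rightarrow> (nat \<times> nat) pmf" where
  "ps_chain rho q 0 s = return_pmf s"
| "ps_chain rho q (Suc t) s = bind_pmf (ps_chain rho q t s) (ps_step rho q)"

text \<open>Mean sojourn time E(Omega_{n,b}): each visit to a non-absorbed state
  has an Exp(1+rho) holding time of mean 1/(1+rho), so the mean sojourn time
  is the sum over steps of P(not yet departed)/(1+rho).\<close>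
definition mean_sojourn :: "real \<Rightarrow> real \<Rightarrow> nat \<Rightarrow> nat \<Rightarrow> real" where
  "mean_sojourn rho q n b =
     (\<Sum>t. measure_pmf.prob (ps_chain rho q t (n, b)) {s. 0 < snd s} / (1 + rho))"

definition E1 :: "real \<Rightarrow> real \<Rightarrow> complex \<Rightarrow> complex \<Rightarrow> complex" where
  "E1 rho q u v = - infsum (\<lambda>(n, b). complex_of_real (mean_sojourn rho q n b) * u ^ n * v ^ b)
                        (UNIV \<times> {1..})"

definition E1v :: "real \<Rightarrow> real \<Rightarrow> complex \<Rightarrow> complex" where
  "E1v rho q v = E1 rho q (complex_of_real q) v"

definition F1 :: "real \<Rightarrow> real \<Rightarrow> complex \<Rightarrow> complex \<Rightarrow> complex" where
  "F1 rho q u v = (if u = complex_of_real q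
      then deriv (\<lambda>w. E1 rho q w v) u
      else (E1 rho q u v - E1 rho q (complex_of_real q) v) / (u - complex_of_real q))"

definition P0 :: "real \<Rightarrow> real \<Rightarrow> complex \<Rightarrow> complex" where
  "P0 rho q u = (1 - u) * (complex_of_real rho + complex_of_real q - u)"

definition L10 :: "complex \<Rightarrow> complex \<Rightarrow> complex" where
  "L10 u v = - (v * (1 - u * v)) / ((1 - u)^2 * (1 - v)^2)"

definition k1 :: "nat \<Rightarrow> complex \<Rightarrow> complex" where
  "k1 b u = - u / (1 - u)^2 - of_nat b / (1 - u)"

definition L1 :: "real \<Rightarrow> real \<Rightarrow> complex \<Rightarrow> complex \<Rightarrow> complex" where
  "L1 rho q u v = L10 u v + (u + v) * E1v rho q v
      - v * (1 + complex_of_real rho - v) * deriv (E1v rho q) v"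

end

theory Submission
  imports Defs
begin

text \<open>
  Write \<open>T(n, b)\<close> for the mean sojourn time and \<open>A(n, b) = (\<Sum>c. q^c T(n + 1 + c, b))\<close>.
  A first-step analysis of the jump chain seen by the tagged batch gives, for \<open>b \<ge> 1\<close>,
  \<open>(1 + rho) (n + b) T(n, b) = (n + b) + rho (1 - q) (n + b) A(n, b) + b T(n, b - 1) + n T(n - 1, b)\<close>,
  a batch arrival contributing the geometric tail \<open>A\<close>.  The sums defining \<open>T\<close> converge, with
  \<open>T(n, b) \<le> K (n + b)\<close>, because for a suitable \<open>K\<close> the function \<open>K (n + b)\<close> decreases by
  exactly 1 per step in mean; this is where \<open>rho + q < 1\<close> enters.
  Polynomially bounded coefficients have generating functions converging on the bidisc, on which
  multiplying the coefficients by \<open>n\<close> or \<open>b\<close> is the Euler operator \<open>u \<partial>/\<partial>u\<close> or \<open>v \<partial>/\<partial>v\<close>.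
  So the recurrence becomes a linear first-order PDE in the generating functions \<open>- E1\<close> of \<open>T\<close>
  and \<open>- F1\<close> of \<open>A\<close>, and the relation \<open>T(n, b) = A(n - 1, b) - q A(n, b)\<close>, i.e.
  \<open>E1(u, v) = (u - q) F1(u, v) + E1(q, v)\<close>, turns it into the stated equation.
\<close>

section \<open>Generating functions of polynomially bounded double sequences\<close>

lemma summable_poly_times_geometric:
  fixes x :: real
  assumes "\<bar>x\<bar> < 1"
  shows "summable (\<lambda>n. (real n + 1) ^ k * x ^ n)"
  using assms
proof (induction k arbitrary: x)
  case 0
  then show ?case by (simp add: summable_geometric)
next
  case (Suc k)
  define c where "c n = (real n + 1) ^ k" for n
  have "summable (\<lambda>n. diffs c n * \<bar>x\<bar> ^ n)"
    by (rule termdiff_converges[where K = 1]) (use Suc in \<open>auto simp: c_def\<close>)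
  then show ?case
  proof (rule summable_comparison_test[rotated], intro exI allI impI)
    fix n :: nat
    have "(real n + 1) ^ k \<le> (real n + 2) ^ k"
      by (intro power_mono) auto
    then show "norm ((real n + 1) ^ Suc k * x ^ n) \<le> diffs c n * \<bar>x\<bar> ^ n"
      by (auto simp: diffs_def c_def abs_mult power_abs add_ac intro!: mult_right_mono)
  qed
qed

lemma summable_on_poly_times_geometric:
  fixes x :: real
  assumes "0 \<le> x" "x < 1"
  shows "(\<lambda>n. (real n + 1) ^ k * x ^ n) summable_on UNIV"
  using summable_poly_times_geometric[of x k] assms
  by (subst summable_on_UNIV_nonneg_real_iff) auto

lemma summable_on_poly_times_geometric2:
  fixes r s :: real
  assumes "0 \<le> r" "r < 1" "0 \<le> s" "s < 1"
  shows "(\<lambda>(j, b). ((real j + 1) * (real b + 1)) ^ k * (r ^ j * s ^ b)) summable_on UNIV"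
proof -
  define H where "H = (\<Sum>\<^sub>\<infinity>b. (real b + 1) ^ k * s ^ b)"
  have H: "((\<lambda>b. (real b + 1) ^ k * s ^ b) has_sum H) UNIV"
    unfolding H_def using summable_on_poly_times_geometric[OF assms(3,4)] by simp
  have "(\<lambda>(j, b). ((real j + 1) * (real b + 1)) ^ k * (r ^ j * s ^ b)) summable_on UNIV \<times> UNIV"
  proof (rule summable_on_SigmaI[where g = "\<lambda>j. ((real j + 1) ^ k * r ^ j) * H"])
    show "((\<lambda>b. (\<lambda>(j, b). ((real j + 1) * (real b + 1)) ^ k * (r ^ j * s ^ b)) (j, b))
        has_sum (real j + 1) ^ k * r ^ j * H) UNIV" for j
      using has_sum_cmult_right[OF H, of "(real j + 1) ^ k * r ^ j"]
      by (simp add: power_mult_distrib mult_ac)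
    show "(\<lambda>j. (real j + 1) ^ k * r ^ j * H) summable_on UNIV"
      by (intro summable_on_cmult_left summable_on_poly_times_geometric assms)
  qed (use assms in auto)
  then show ?thesis by simp
qed

definition poly_bounded :: "(nat \<times> nat \<Rightarrow> real) \<Rightarrow> bool" where
  "poly_bounded c \<longleftrightarrow> (\<exists>M k. \<forall>j b. \<bar>c (j, b)\<bar> \<le> M * ((real j + 1) * (real b + 1)) ^ k)"

lemma poly_boundedI:
  "(\<And>j b. \<bar>c (j, b)\<bar> \<le> M * ((real j + 1) * (real b + 1)) ^ k) \<Longrightarrow> poly_bounded c"
  unfolding poly_bounded_def by blast

lemma poly_boundedE:
  assumes "poly_bounded c"
  obtains M k where "0 \<le> M" "\<And>j b. \<bar>c (j, b)\<bar> \<le> M * ((real j + 1) * (real b + 1)) ^ k"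
proof -
  obtain M k where M: "\<And>j b. \<bar>c (j, b)\<bar> \<le> M * ((real j + 1) * (real b + 1)) ^ k"
    using assms unfolding poly_bounded_def by blast
  have "0 \<le> M" using order_trans[OF abs_ge_zero M[of 0 0]] by simp
  then show thesis using M by (rule that)
qed

lemma poly_bounded_swap:
  assumes "poly_bounded c"
  shows "poly_bounded (c \<circ> prod.swap)"
proof -
  obtain M k where "\<And>j b. \<bar>c (j, b)\<bar> \<le> M * ((real j + 1) * (real b + 1)) ^ k"
    using assms by (elim poly_boundedE) blast
  then have "\<bar>c (b, j)\<bar> \<le> M * ((real j + 1) * (real b + 1)) ^ k" for j b
    by (metis mult.commute)
  then show ?thesis
    by (intro poly_boundedI[of _ M k]) simp
qed

text \<open>Coefficients of \<open>u * f\<close>, of \<open>\<partial>f/\<partial>u\<close> and of the Euler operator \<open>u * \<partial>f/\<partial>u\<close>,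
  for \<open>f\<close> the generating function in the first variable \<open>u\<close>; similarly for \<open>v\<close>.\<close>

definition shift_fst :: "(nat \<times> nat \<Rightarrow> real) \<Rightarrow> nat \<times> nat \<Rightarrow> real" where
  "shift_fst c = (\<lambda>(j, b). if j = 0 then 0 else c (j - 1, b))"

definition shift_snd :: "(nat \<times> nat \<Rightarrow> real) \<Rightarrow> nat \<times> nat \<Rightarrow> real" where
  "shift_snd c = (\<lambda>(j, b). if b = 0 then 0 else c (j, b - 1))"

definition deriv_fst :: "(nat \<times> nat \<Rightarrow> real) \<Rightarrow> nat \<times> nat \<Rightarrow> real" where
  "deriv_fst c = (\<lambda>(j, b). real (Suc j) * c (Suc j, b))"

definition euler_fst :: "(nat \<times> nat \<Rightarrow> real) \<Rightarrow> nat \<times> nat \<Rightarrow> real" where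
  "euler_fst c = (\<lambda>(j, b). real j * c (j, b))"

definition euler_snd :: "(nat \<times> nat \<Rightarrow> real) \<Rightarrow> nat \<times> nat \<Rightarrow> real" where
  "euler_snd c = (\<lambda>(j, b). real b * c (j, b))"

lemma shift_fst_deriv_fst: "shift_fst (deriv_fst c) = euler_fst c"
  by (auto simp: fun_eq_iff shift_fst_def deriv_fst_def euler_fst_def)

lemma euler_snd_swap: "euler_snd c = euler_fst (c \<circ> prod.swap) \<circ> prod.swap"
  by (auto simp: fun_eq_iff euler_fst_def euler_snd_def)

lemma poly_bounded_euler_fst:
  assumes "poly_bounded c"
  shows "poly_bounded (euler_fst c)"
proof -
  obtain M k where M: "0 \<le> M" "\<And>j b. \<bar>c (j, b)\<bar> \<le> M * ((real j + 1) * (real b + 1)) ^ k"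
    using assms by (elim poly_boundedE) blast
  show ?thesis
  proof (rule poly_boundedI[of _ M "Suc k"])
    fix j b
    define B where "B = (real j + 1) * (real b + 1)"
    have "real j \<le> B"
      by (simp add: B_def algebra_simps)
    then have "real j * \<bar>c (j, b)\<bar> \<le> B * (M * B ^ k)"
      using M unfolding B_def by (intro mult_mono) auto
    then show "\<bar>euler_fst c (j, b)\<bar> \<le> M * B ^ Suc k"
      by (simp add: euler_fst_def abs_mult mult_ac)
  qed
qed

lemma poly_bounded_euler_snd: "poly_bounded c \<Longrightarrow> poly_bounded (euler_snd c)"
  unfolding euler_snd_swap by (intro poly_bounded_swap poly_bounded_euler_fst)

lemma poly_bounded_deriv_fst:
  assumes "poly_bounded c"
  shows "poly_bounded (deriv_fst c)"
proof -
  obtain M k where M: "0 \<le> M" "\<And>j b. \<bar>c (j, b)\<bar> \<le> M * ((real j + 1) * (real b + 1)) ^ k"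
    using assms by (elim poly_boundedE) blast
  show ?thesis
  proof (rule poly_boundedI[of _ "2 ^ k * M" "Suc k"])
    fix j b
    define B where "B = (real j + 1) * (real b + 1)"
    have "(real (Suc j) + 1) * (real b + 1) \<le> 2 * B"
      by (simp add: B_def algebra_simps)
    then have "((real (Suc j) + 1) * (real b + 1)) ^ k \<le> (2 * B) ^ k"
      by (intro power_mono) auto
    then have "\<bar>c (Suc j, b)\<bar> \<le> M * (2 * B) ^ k"
      using order_trans[OF M(2)[of "Suc j" b] mult_left_mono[OF _ M(1)]] by blast
    moreover have "real (Suc j) \<le> B"
      by (simp add: B_def algebra_simps)
    ultimately have "real (Suc j) * \<bar>c (Suc j, b)\<bar> \<le> B * (M * (2 * B) ^ k)"
      by (intro mult_mono) auto
    then show "\<bar>deriv_fst c (j, b)\<bar> \<le> 2 ^ k * M * B ^ Suc k"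
      by (simp add: deriv_fst_def abs_mult power_mult_distrib mult_ac)
  qed
qed

definition has_gf :: "(nat \<times> nat \<Rightarrow> real) \<Rightarrow> complex \<Rightarrow> complex \<Rightarrow> complex \<Rightarrow> bool" where
  "has_gf c u v X \<longleftrightarrow> ((\<lambda>(j, b). of_real (c (j, b)) * u ^ j * v ^ b) has_sum X) UNIV"

definition gf :: "(nat \<times> nat \<Rightarrow> real) \<Rightarrow> complex \<Rightarrow> complex \<Rightarrow> complex" where
  "gf c u v = (\<Sum>\<^sub>\<infinity>(j, b). of_real (c (j, b)) * u ^ j * v ^ b)"

lemma has_gf_unique: "has_gf c u v X \<Longrightarrow> has_gf c u v Y \<Longrightarrow> X = Y"
  unfolding has_gf_def by (rule has_sum_unique)

lemma gf_eqI: "has_gf c u v X \<Longrightarrow> gf c u v = X"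
  unfolding has_gf_def gf_def by (rule infsumI)

lemma has_gf_add: "has_gf c u v X \<Longrightarrow> has_gf d u v Y \<Longrightarrow> has_gf (\<lambda>x. c x + d x) u v (X + Y)"
  unfolding has_gf_def by (drule (1) has_sum_add) (simp add: case_prod_unfold algebra_simps)

lemma has_gf_scale: "has_gf c u v X \<Longrightarrow> has_gf (\<lambda>x. a * c x) u v (of_real a * X)"
  unfolding has_gf_def
  by (drule has_sum_cmult_right[of _ _ _ "of_real a"]) (simp add: case_prod_unfold mult_ac)

lemma has_gf_shift_fst:
  assumes "has_gf c u v X"
  shows "has_gf (shift_fst c) u v (u * X)"
proof -
  define g where "g = (\<lambda>(j, b). of_real (shift_fst c (j, b)) * u ^ j * v ^ b)"
  have "((g \<circ> (\<lambda>(j, b). (Suc j, b))) has_sum u * X) UNIV"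
    using has_sum_cmult_right[OF assms[unfolded has_gf_def], of u]
    by (simp add: g_def shift_fst_def case_prod_unfold comp_def mult_ac)
  then have "(g has_sum u * X) (range (\<lambda>(j, b). (Suc j, b)))"
    by (subst has_sum_reindex) (auto simp: inj_on_def)
  moreover have "g x = 0" if "x \<notin> range (\<lambda>(j, b). (Suc j, b))" for x
    using that by (cases x) (auto simp: g_def shift_fst_def gr0_conv_Suc image_iff)
  ultimately show ?thesis
    unfolding has_gf_def g_def[symmetric] by (rule has_sum_cong_neutral[THEN iffD1, rotated -1]) auto
qed

lemma has_gf_shift_snd:
  assumes "has_gf c u v X"
  shows "has_gf (shift_snd c) u v (v * X)"
proof -
  define g where "g = (\<lambda>(j, b). of_real (shift_snd c (j, b)) * u ^ j * v ^ b)"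
  have "((g \<circ> (\<lambda>(j, b). (j, Suc b))) has_sum v * X) UNIV"
    using has_sum_cmult_right[OF assms[unfolded has_gf_def], of v]
    by (simp add: g_def shift_snd_def case_prod_unfold comp_def mult_ac)
  then have "(g has_sum v * X) (range (\<lambda>(j, b). (j, Suc b)))"
    by (subst has_sum_reindex) (auto simp: inj_on_def)
  moreover have "g x = 0" if "x \<notin> range (\<lambda>(j, b). (j, Suc b))" for x
    using that by (cases x) (auto simp: g_def shift_snd_def gr0_conv_Suc image_iff)
  ultimately show ?thesis
    unfolding has_gf_def g_def[symmetric] by (rule has_sum_cong_neutral[THEN iffD1, rotated -1]) auto
qed

lemma abs_summable_gf:
  fixes u v :: complex
  assumes "poly_bounded c" "norm u < 1" "norm v < 1"
  shows "(\<lambda>x. norm ((\<lambda>(j, b). of_real (c (j, b)) * u ^ j * v ^ b) x)) summable_on UNIV"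
proof -
  obtain M k where M: "0 \<le> M" "\<And>j b. \<bar>c (j, b)\<bar> \<le> M * ((real j + 1) * (real b + 1)) ^ k"
    using assms(1) by (elim poly_boundedE) blast
  have "(\<lambda>x. M * (\<lambda>(j, b). ((real j + 1) * (real b + 1)) ^ k * (norm u ^ j * norm v ^ b)) x)
      summable_on UNIV"
    by (intro summable_on_cmult_right summable_on_poly_times_geometric2) (use assms in auto)
  then show ?thesis
  proof (rule Infinite_Sum.abs_summable_on_comparison_test')
    fix x :: "nat \<times> nat"
    obtain j b where x: "x = (j, b)" by (cases x)
    have "\<bar>c (j, b)\<bar> * (norm u ^ j * norm v ^ b)
        \<le> M * ((real j + 1) * (real b + 1)) ^ k * (norm u ^ j * norm v ^ b)"
      by (intro mult_right_mono M) auto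
    then show "norm ((\<lambda>(j, b). of_real (c (j, b)) * u ^ j * v ^ b) x)
        \<le> M * (\<lambda>(j, b). ((real j + 1) * (real b + 1)) ^ k * (norm u ^ j * norm v ^ b)) x"
      by (simp add: x norm_mult norm_power mult_ac)
  qed
qed

lemma has_gf_gf:
  "poly_bounded c \<Longrightarrow> norm u < 1 \<Longrightarrow> norm v < 1 \<Longrightarrow> has_gf c u v (gf c u v)"
  unfolding has_gf_def gf_def by (intro has_sum_infsum abs_summable_summable[OF abs_summable_gf])

lemma gf_swap:
  assumes "poly_bounded c" "norm u < 1" "norm v < 1"
  shows "gf (c \<circ> prod.swap) v u = gf c u v"
proof (rule gf_eqI)
  have "((\<lambda>(j, b). of_real (c (j, b)) * u ^ j * v ^ b) has_sum gf c u v) (UNIV \<times> UNIV)"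
    using has_gf_gf[OF assms] by (simp add: has_gf_def)
  then show "has_gf (c \<circ> prod.swap) v u (gf c u v)"
    unfolding has_gf_def by (subst (asm) has_sum_swap) (simp add: case_prod_unfold mult_ac)
qed

lemma summable_on_gf_column:
  fixes v :: complex
  assumes "poly_bounded c" "norm v < 1"
  shows "(\<lambda>b. of_real (c (j, b)) * v ^ b) summable_on UNIV"
proof -
  obtain M k where M: "0 \<le> M" "\<And>j b. \<bar>c (j, b)\<bar> \<le> M * ((real j + 1) * (real b + 1)) ^ k"
    using assms(1) by (elim poly_boundedE) blast
  have "(\<lambda>b. (M * (real j + 1) ^ k) * ((real b + 1) ^ k * norm v ^ b)) summable_on UNIV"
    by (intro summable_on_cmult_right summable_on_poly_times_geometric) (use assms in auto)
  then have "(\<lambda>b. norm (of_real (c (j, b)) * v ^ b)) summable_on UNIV"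
  proof (rule Infinite_Sum.abs_summable_on_comparison_test')
    fix b
    have "\<bar>c (j, b)\<bar> * norm v ^ b \<le> M * ((real j + 1) * (real b + 1)) ^ k * norm v ^ b"
      by (intro mult_right_mono M) auto
    then show "norm (of_real (c (j, b)) * v ^ b) \<le> M * (real j + 1) ^ k * ((real b + 1) ^ k * norm v ^ b)"
      by (simp add: norm_mult norm_power power_mult_distrib mult_ac)
  qed
  then show ?thesis
    by (rule abs_summable_summable)
qed

lemma gf_sums_columns:
  assumes "poly_bounded c" "norm u < 1" "norm v < 1"
  shows "(\<lambda>j. (\<Sum>\<^sub>\<infinity>b. of_real (c (j, b)) * v ^ b) * u ^ j) sums gf c u v"
proof -
  define f where "f = (\<lambda>(j, b). of_real (c (j, b)) * u ^ j * v ^ b)"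
  have f: "(f has_sum gf c u v) (UNIV \<times> UNIV)"
    using has_gf_gf[OF assms] by (simp add: has_gf_def f_def)
  have "((\<lambda>b. f (j, b)) has_sum (\<Sum>\<^sub>\<infinity>b. of_real (c (j, b)) * v ^ b) * u ^ j) UNIV" for j
  proof -
    have "(\<lambda>b. f (j, b)) summable_on UNIV"
      using summable_on_cmult_right[OF summable_on_gf_column[OF assms(1,3)], of "u ^ j"]
      by (simp add: f_def mult_ac)
    then have "((\<lambda>b. f (j, b)) has_sum (\<Sum>\<^sub>\<infinity>b. f (j, b))) UNIV"
      by (rule has_sum_infsum)
    moreover have "(\<Sum>\<^sub>\<infinity>b. f (j, b)) = (\<Sum>\<^sub>\<infinity>b. of_real (c (j, b)) * v ^ b) * u ^ j"
      by (simp add: f_def infsum_cmult_right' mult_ac)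
    ultimately show ?thesis by simp
  qed
  from has_sum_Sigma'[OF f this] show ?thesis
    by (rule has_sum_imp_sums)
qed

lemma has_field_derivative_gf_fst:
  assumes "poly_bounded c" "norm u < 1" "norm v < 1"
  shows "((\<lambda>w. gf c w v) has_field_derivative gf (deriv_fst c) u v) (at u)"
proof -
  define a where "a j = (\<Sum>\<^sub>\<infinity>b. of_real (c (j, b)) * v ^ b)" for j
  have sums: "(\<lambda>j. a j * w ^ j) sums gf c w v" if "norm w < 1" for w
    unfolding a_def using gf_sums_columns[OF assms(1) that assms(3)] .
  have "diffs a j = (\<Sum>\<^sub>\<infinity>b. of_real (deriv_fst c (j, b)) * v ^ b)" for j
    by (simp add: diffs_def a_def deriv_fst_def infsum_cmult_right'[symmetric] mult_ac)
  then have "(\<lambda>j. diffs a j * u ^ j) sums gf (deriv_fst c) u v"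
    using gf_sums_columns[OF poly_bounded_deriv_fst[OF assms(1)] assms(2,3)] by simp
  moreover have "((\<lambda>w. \<Sum>j. a j * w ^ j) has_field_derivative (\<Sum>j. diffs a j * u ^ j)) (at u)"
    by (rule termdiffs_strong'[where K = 1]) (use sums assms in \<open>auto dest: sums_summable\<close>)
  ultimately have "((\<lambda>w. \<Sum>j. a j * w ^ j) has_field_derivative gf (deriv_fst c) u v) (at u)"
    by (simp add: sums_iff)
  then show ?thesis
    by (rule has_field_derivative_transform_within_open[where S = "ball 0 1"])
      (use assms sums in \<open>auto simp: sums_iff\<close>)
qed

lemma euler_fst_gf:
  assumes "poly_bounded c" "norm u < 1" "norm v < 1"
  shows "u * deriv (\<lambda>w. gf c w v) u = gf (euler_fst c) u v"
proof -
  have "has_gf (euler_fst c) u v (u * gf (deriv_fst c) u v)"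
    unfolding shift_fst_deriv_fst[symmetric]
    by (intro has_gf_shift_fst has_gf_gf poly_bounded_deriv_fst assms)
  then show ?thesis
    using DERIV_imp_deriv[OF has_field_derivative_gf_fst[OF assms]] by (simp add: gf_eqI)
qed

lemma has_field_derivative_gf_snd:
  assumes "poly_bounded c" "norm u < 1" "norm v < 1"
  shows "((\<lambda>w. gf c u w) has_field_derivative gf (deriv_fst (c \<circ> prod.swap)) v u) (at v)"
proof -
  have "((\<lambda>w. gf (c \<circ> prod.swap) w u) has_field_derivative gf (deriv_fst (c \<circ> prod.swap)) v u) (at v)"
    by (intro has_field_derivative_gf_fst poly_bounded_swap assms)
  then show ?thesis
    by (rule has_field_derivative_transform_within_open[where S = "ball 0 1"])
      (use assms in \<open>auto simp: gf_swap\<close>)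
qed

lemma euler_snd_gf:
  assumes "poly_bounded c" "norm u < 1" "norm v < 1"
  shows "v * deriv (\<lambda>w. gf c u w) v = gf (euler_snd c) u v"
proof -
  have "v * deriv (\<lambda>w. gf (c \<circ> prod.swap) w u) v = gf (euler_fst (c \<circ> prod.swap)) v u"
    by (intro euler_fst_gf poly_bounded_swap assms)
  moreover have "eventually (\<lambda>w. w \<in> ball 0 1) (nhds v)"
    by (intro eventually_nhds_in_open) (use assms in auto)
  then have "eventually (\<lambda>w. gf (c \<circ> prod.swap) w u = gf c u w) (nhds v)"
    by eventually_elim (use assms in \<open>simp add: gf_swap\<close>)
  then have "deriv (\<lambda>w. gf (c \<circ> prod.swap) w u) v = deriv (\<lambda>w. gf c u w) v"
    by (rule deriv_cong_ev) simp
  moreover have "gf (euler_fst (c \<circ> prod.swap)) v u = gf (euler_snd c) u v"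
    using gf_swap[OF poly_bounded_euler_fst[OF poly_bounded_swap[OF assms(1)]] assms(3,2)]
    by (simp add: euler_snd_swap)
  ultimately show ?thesis by simp
qed

lemma gf_field_differentiable_fst:
  "poly_bounded c \<Longrightarrow> norm u < 1 \<Longrightarrow> norm v < 1 \<Longrightarrow> (\<lambda>w. gf c w v) field_differentiable at u"
  using has_field_derivative_gf_fst field_differentiable_def by blast

lemma gf_field_differentiable_snd:
  "poly_bounded c \<Longrightarrow> norm u < 1 \<Longrightarrow> norm v < 1 \<Longrightarrow> (\<lambda>w. gf c u w) field_differentiable at v"
  using has_field_derivative_gf_snd field_differentiable_def by blast

lemma deriv_eq_neg_on_unit_disc:
  fixes f g :: "complex \<Rightarrow> complex"
  assumes "\<And>w. norm w < 1 \<Longrightarrow> f w = - g w" "g field_differentiable at z" "norm z < 1"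
  shows "deriv f z = - deriv g z"
proof -
  have "eventually (\<lambda>w. w \<in> ball 0 1) (nhds z)"
    by (intro eventually_nhds_in_open) (use assms(3) in auto)
  then have "eventually (\<lambda>w. f w = - g w) (nhds z)"
    by eventually_elim (use assms(1) in auto)
  then have "deriv f z = deriv (\<lambda>w. - g w) z"
    by (rule deriv_cong_ev) simp
  then show ?thesis
    using assms(2) by simp
qed

lemma L10_sums:
  assumes "norm u < 1" "norm v < 1"
  shows "(\<lambda>b. k1 (Suc b) u * v ^ Suc b) sums L10 u v"
proof -
  have u: "1 - u \<noteq> 0" and v: "1 - v \<noteq> 0"
    using assms by auto
  have "(\<lambda>b. v ^ Suc b) sums (v / (1 - v))"
    using sums_mult[OF geometric_sums[OF assms(2)], of v] by (simp add: field_simps)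
  moreover have "(\<lambda>b. v ^ Suc b * of_nat (Suc b)) sums (v / (1 - v)\<^sup>2)"
    using geometric_sums_times_n[OF assms(2)] by (subst sums_Suc_iff) simp
  ultimately have "(\<lambda>b. - u / (1 - u)\<^sup>2 * v ^ Suc b - 1 / (1 - u) * (v ^ Suc b * of_nat (Suc b)))
      sums (- u / (1 - u)\<^sup>2 * (v / (1 - v)) - 1 / (1 - u) * (v / (1 - v)\<^sup>2))"
    by (intro sums_diff sums_mult)
  moreover have "- u / (1 - u)\<^sup>2 * (v / (1 - v)) - 1 / (1 - u) * (v / (1 - v)\<^sup>2) = L10 u v"
  proof -
    define a c where "a = 1 - u" and "c = 1 - v"
    have uv: "u = 1 - a" "v = 1 - c" and "a \<noteq> 0" "c \<noteq> 0"
      using u v by (auto simp: a_def c_def)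
    then show ?thesis
      unfolding L10_def uv by (simp add: field_simps power2_eq_square)
  qed
  ultimately show ?thesis
    by (simp add: k1_def algebra_simps add_divide_distrib)
qed

lemma has_gf_L10:
  assumes "norm u < 1" "norm v < 1"
  shows "has_gf (\<lambda>(j, b). if b = 0 then 0 else real j + real b) u v (- L10 u v)"
proof -
  define c where "c = (\<lambda>(j, b). if b = 0 then 0 else real j + real b)"
  have bound: "\<bar>c (j, b)\<bar> \<le> 1 * ((real j + 1) * (real b + 1)) ^ 1" for j b
    by (simp add: c_def algebra_simps)
  have pb: "poly_bounded c" "poly_bounded (c \<circ> prod.swap)"
    using poly_boundedI[OF bound] by (auto intro: poly_bounded_swap)
  have row: "(\<Sum>\<^sub>\<infinity>j. of_real ((c \<circ> prod.swap) (b, j)) * u ^ j) = (if b = 0 then 0 else - k1 b u)"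
    for b
  proof -
    have "(\<lambda>j. of_real ((c \<circ> prod.swap) (b, j)) * u ^ j)
        sums (\<Sum>\<^sub>\<infinity>j. of_real ((c \<circ> prod.swap) (b, j)) * u ^ j)"
      by (intro has_sum_imp_sums has_sum_infsum summable_on_gf_column pb assms)
    moreover have "(\<lambda>j. of_real ((c \<circ> prod.swap) (b, j)) * u ^ j) sums (if b = 0 then 0 else - k1 b u)"
    proof (cases "b = 0")
      case False
      have "(\<lambda>j. u ^ j * of_nat j + of_nat b * u ^ j) sums (u / (1 - u)\<^sup>2 + of_nat b * (1 / (1 - u)))"
        by (intro sums_add sums_mult geometric_sums_times_n geometric_sums assms)
      with False show ?thesis
        by (simp add: c_def k1_def algebra_simps)
    qed (simp add: c_def)
    ultimately show ?thesis
      by (rule sums_unique2)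
  qed
  have "(\<lambda>b. (if b = 0 then 0 else - k1 b u) * v ^ b) sums gf c u v"
    using gf_sums_columns[OF pb(2) assms(2,1)] gf_swap[OF pb(1) assms] by (simp only: row)
  moreover have "(\<lambda>b. (if b = 0 then 0 else - k1 b u) * v ^ b) sums - L10 u v"
  proof -
    have "(\<lambda>b. (\<lambda>b. (if b = 0 then 0 else - k1 b u) * v ^ b) (Suc b)) sums - L10 u v"
      using sums_minus[OF L10_sums[OF assms]] by simp
    then show ?thesis
      by (subst (asm) sums_Suc_iff) simp
  qed
  ultimately have "gf c u v = - L10 u v"
    by (rule sums_unique2)
  then show ?thesis
    using has_gf_gf[OF pb(1) assms] by (simp add: c_def)
qed

section \<open>The jump chain seen by a tagged batch\<close>

lemma ps_chain_Suc_first: "ps_chain rho q (Suc t) s = ps_step rho q s \<bind> ps_chain rho q t"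
proof (induction t arbitrary: s)
  case 0
  then show ?case by (simp add: bind_return_pmf bind_return_pmf')
next
  case (Suc t)
  have "ps_chain rho q (Suc (Suc t)) s = ps_chain rho q (Suc t) s \<bind> ps_step rho q"
    by simp
  also have "\<dots> = ps_step rho q s \<bind> (\<lambda>x. ps_chain rho q t x \<bind> ps_step rho q)"
    by (simp only: Suc bind_assoc_pmf)
  finally show ?case
    by simp
qed

lemma ps_chain_absorbed: "ps_chain rho q t (m, 0) = return_pmf (m, 0)"
  by (induction t) (simp_all add: ps_step_def bind_return_pmf)

locale ps_queue =
  fixes rho q :: real
  assumes rho_pos: "0 < rho" and q_pos: "0 < q" and q_less_1: "q < 1" and stable: "rho + q < 1"
begin

definition step_mean :: "(nat \<times> nat \<Rightarrow> real) \<Rightarrow> nat \<times> nat \<Rightarrow> real" where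
  "step_mean f = (\<lambda>(m, k). rho / (1 + rho) * (\<Sum>c. (1 - q) * q ^ c * f (m + Suc c, k))
     + 1 / (1 + rho) * (real k / real (m + k) * f (m, k - 1) + real m / real (m + k) * f (m - 1, k)))"

lemma nn_integral_ps_step:
  assumes "0 < k" "\<And>x. 0 \<le> f x" "summable (\<lambda>c. (1 - q) * q ^ c * f (m + Suc c, k))"
  shows "(\<integral>\<^sup>+x. ennreal (f x) \<partial>ps_step rho q (m, k)) = ennreal (step_mean f (m, k))"
proof -
  have "(\<integral>\<^sup>+c. ennreal (f (m + c, k)) \<partial>batch_pmf q)
      = (\<Sum>c. ennreal ((1 - q) * q ^ c * f (m + Suc c, k)))"
    using q_pos q_less_1 assms(2) unfolding batch_pmf_def
    by (simp only: nn_integral_map_pmf)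
      (simp add: nn_integral_measure_pmf nn_integral_count_space_nat ennreal_mult' mult_ac)
  also have "\<dots> = ennreal (\<Sum>c. (1 - q) * q ^ c * f (m + Suc c, k))"
    using q_pos q_less_1 assms(2,3) by (intro suminf_ennreal2) auto
  finally have batch: "(\<integral>\<^sup>+c. ennreal (f (m + c, k)) \<partial>batch_pmf q) = \<dots>" .
  define \<alpha> where "\<alpha> = rho / (1 + rho)"
  define \<beta> where "\<beta> = real k / real (m + k)"
  define S where "S = (\<Sum>c. (1 - q) * q ^ c * f (m + Suc c, k))"
  have \<alpha>: "0 \<le> \<alpha>" "\<alpha> \<le> 1" and \<beta>: "0 \<le> \<beta>" "\<beta> \<le> 1"
    using rho_pos assms(1) by (auto simp: \<alpha>_def \<beta>_def divide_le_eq_1)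
  have "0 \<le> S"
    using q_pos q_less_1 assms(2,3) unfolding S_def by (intro suminf_nonneg) auto
  have "S * \<alpha> + (f (m, k - 1) * \<beta> + f (m - 1, k) * (1 - \<beta>)) * (1 - \<alpha>) = step_mean f (m, k)"
  proof -
    have w: "1 - \<alpha> = 1 / (1 + rho)" "1 - \<beta> = real m / real (m + k)"
      using rho_pos assms(1) by (simp_all add: \<alpha>_def \<beta>_def field_simps)
    show ?thesis
      unfolding w unfolding step_mean_def \<alpha>_def \<beta>_def S_def by (simp add: algebra_simps)
  qed
  moreover have "(\<integral>\<^sup>+x. ennreal (f x) \<partial>ps_step rho q (m, k))
      = ennreal S * ennreal \<alpha>
        + (ennreal (f (m, k - 1)) * ennreal \<beta> + ennreal (f (m - 1, k)) * ennreal (1 - \<beta>))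
          * ennreal (1 - \<alpha>)"
    using assms(1) \<alpha> \<beta> unfolding \<alpha>_def \<beta>_def S_def by (simp add: ps_step_def batch)
  moreover have "\<dots> = ennreal (S * \<alpha> + (f (m, k - 1) * \<beta> + f (m - 1, k) * (1 - \<beta>)) * (1 - \<alpha>))"
    using \<open>0 \<le> S\<close> \<alpha> \<beta> assms(2) by (simp add: ennreal_mult)
  ultimately show ?thesis
    by simp
qed

definition survival :: "nat \<Rightarrow> nat \<times> nat \<Rightarrow> real" where
  "survival t s = measure_pmf.prob (ps_chain rho q t s) {s. 0 < snd s}"

lemma survival_nonneg: "0 \<le> survival t s"
  by (simp add: survival_def)

lemma survival_absorbed: "survival t (m, 0) = 0"
  by (simp add: survival_def ps_chain_absorbed)

lemma ennreal_survival_Suc: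
  "ennreal (survival (Suc t) s) = (\<integral>\<^sup>+x. ennreal (survival t x) \<partial>ps_step rho q s)"
proof -
  have "ennreal (survival (Suc t) s) = emeasure (ps_chain rho q (Suc t) s) {s. 0 < snd s}"
    by (simp only: survival_def measure_pmf.emeasure_eq_measure)
  also have "\<dots> = (\<integral>\<^sup>+x. emeasure (ps_chain rho q t x) {s. 0 < snd s} \<partial>ps_step rho q s)"
    by (simp only: ps_chain_Suc_first emeasure_bind_pmf)
  also have "\<dots> = (\<integral>\<^sup>+x. ennreal (survival t x) \<partial>ps_step rho q s)"
    by (simp only: survival_def measure_pmf.emeasure_eq_measure)
  finally show ?thesis .
qed

definition lyapunov_slope :: real where
  "lyapunov_slope = (1 + rho) * (1 - q) / (1 - q - rho)"

definition lyapunov :: "nat \<times> nat \<Rightarrow> real" where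
  "lyapunov = (\<lambda>(m, k). lyapunov_slope * (real m + real k))"

lemma lyapunov_slope_ge_1: "1 \<le> lyapunov_slope"
  using rho_pos q_pos q_less_1 stable by (simp add: lyapunov_slope_def field_simps)

lemma lyapunov_nonneg: "0 \<le> lyapunov s"
  using lyapunov_slope_ge_1 by (simp add: lyapunov_def split: prod.split)

lemma geometric_linear_sums:
  "(\<lambda>c. (1 - q) * q ^ c * (real (n + Suc c) + x)) sums (real n + x + 1 / (1 - q))"
proof -
  have "(1 - q) * (q / (1 - q)\<^sup>2) = q / (1 - q)"
    using q_less_1 by (simp add: power2_eq_square)
  then have total: "(1 - q) * (real n + x + 1) * (1 / (1 - q)) + (1 - q) * (q / (1 - q)\<^sup>2)
      = real n + x + 1 / (1 - q)"
    using q_less_1 by (simp add: field_simps)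
  have "(\<lambda>c. (1 - q) * (real n + x + 1) * q ^ c + (1 - q) * (q ^ c * real c))
      sums ((1 - q) * (real n + x + 1) * (1 / (1 - q)) + (1 - q) * (q / (1 - q)\<^sup>2))"
    using q_pos q_less_1 by (intro sums_add sums_mult geometric_sums geometric_sums_times_n) auto
  then show ?thesis
    unfolding total by (simp add: algebra_simps)
qed
lemma summable_geometric_weighted:
  assumes "\<And>x. 0 \<le> f x" "\<And>x. f x \<le> lyapunov x"
  shows "summable (\<lambda>c. (1 - q) * q ^ c * f (m + Suc c, k))"
proof (rule summable_comparison_test[OF _ summable_mult[OF sums_summable[OF geometric_linear_sums]]],
    intro exI allI impI)
  fix c :: nat
  have "(1 - q) * q ^ c * f (m + Suc c, k) \<le> (1 - q) * q ^ c * lyapunov (m + Suc c, k)"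
    using assms(2) q_pos q_less_1 by (intro mult_left_mono) auto
  then show "norm ((1 - q) * q ^ c * f (m + Suc c, k))
      \<le> lyapunov_slope * ((1 - q) * q ^ c * (real (m + Suc c) + real k))"
    using assms(1)[of "(m + Suc c, k)"] q_pos q_less_1 by (simp add: lyapunov_def abs_mult mult_ac)
qed

lemma lyapunov_slope_drift: "lyapunov_slope * (rho / ((1 + rho) * (1 - q)) - 1 / (1 + rho)) = -1"
proof -
  have nonzero: "1 - q \<noteq> 0" "1 + rho \<noteq> 0" "1 - q - rho \<noteq> 0"
    using rho_pos q_less_1 stable by auto
  then have "lyapunov_slope * (rho / ((1 + rho) * (1 - q))) = rho / (1 - q - rho)"
    and "lyapunov_slope * (1 / (1 + rho)) = (1 - q) / (1 - q - rho)"
    by (simp_all add: lyapunov_slope_def)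
  then have "lyapunov_slope * (rho / ((1 + rho) * (1 - q)) - 1 / (1 + rho))
      = - (1 - q - rho) / (1 - q - rho)"
    by (simp add: right_diff_distrib diff_divide_distrib[symmetric])
  then show ?thesis
    by (simp only: minus_divide_left[symmetric] divide_self[OF nonzero(3)])
qed

lemma step_mean_lyapunov:
  assumes "0 < b"
  shows "step_mean lyapunov (n, b) = lyapunov (n, b) - 1"
proof -
  define K where "K = lyapunov_slope"
  have arrivals: "(\<Sum>c. (1 - q) * q ^ c * lyapunov (n + Suc c, b))
      = K * (real n + real b + 1 / (1 - q))"
    using sums_mult[OF geometric_linear_sums[of n "real b"], of K]
    by (simp add: K_def lyapunov_def sums_iff mult_ac)
  have "real n * lyapunov (n - 1, b) = real n * (K * (real n + real b - 1))"
    by (cases n) (simp_all add: K_def lyapunov_def algebra_simps)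
  then have departures:
    "real b / real (n + b) * lyapunov (n, b - 1) + real n / real (n + b) * lyapunov (n - 1, b)
      = K * (real n + real b - 1)"
    using assms by (simp add: K_def lyapunov_def of_nat_diff add_divide_distrib[symmetric] field_simps)
  have "step_mean lyapunov (n, b)
      = rho / (1 + rho) * (K * (real n + real b + 1 / (1 - q)))
        + 1 / (1 + rho) * (K * (real n + real b - 1))"
    by (simp only: step_mean_def case_prod_conv arrivals departures)
  also have "\<dots> = (rho / (1 + rho) + 1 / (1 + rho)) * (K * (real n + real b))
      + K * (rho / ((1 + rho) * (1 - q)) - 1 / (1 + rho))"
    by (simp add: algebra_simps)
  also have "\<dots> = lyapunov (n, b) - 1"
  proof -
    have "rho / (1 + rho) + 1 / (1 + rho) = 1"
      using rho_pos by (simp add: add_divide_distrib[symmetric])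
    then show ?thesis
      unfolding K_def lyapunov_slope_drift by (simp add: lyapunov_def)
  qed
  finally show ?thesis .
qed
lemma ennreal_sum_survival_Suc:
  assumes "0 < b"
  shows "ennreal (\<Sum>t<Suc N. survival t (n, b))
    = 1 + (\<integral>\<^sup>+x. ennreal (\<Sum>t<N. survival t x) \<partial>ps_step rho q (n, b))"
proof -
  have "(\<Sum>t<Suc N. survival t (n, b)) = 1 + (\<Sum>t<N. survival (Suc t) (n, b))"
    using assms by (simp only: sum.lessThan_Suc_shift) (simp add: survival_def)
  then have "ennreal (\<Sum>t<Suc N. survival t (n, b)) = 1 + (\<Sum>t<N. ennreal (survival (Suc t) (n, b)))"
    by (simp add: survival_nonneg sum_nonneg)
  also have "\<dots> = 1 + (\<integral>\<^sup>+x. (\<Sum>t<N. ennreal (survival t x)) \<partial>ps_step rho q (n, b))"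
    by (simp add: ennreal_survival_Suc nn_integral_sum del: sum_ennreal)
  also have "\<dots> = 1 + (\<integral>\<^sup>+x. ennreal (\<Sum>t<N. survival t x) \<partial>ps_step rho q (n, b))"
    by (simp add: survival_nonneg)
  finally show ?thesis .
qed

lemma sum_survival_le_lyapunov: "(\<Sum>t<N. survival t s) \<le> lyapunov s"
proof (induction N arbitrary: s)
  case 0
  then show ?case by (simp add: lyapunov_nonneg)
next
  case (Suc N)
  obtain n b where s: "s = (n, b)"
    by fastforce
  show ?case
  proof (cases "b = 0")
    case True
    then show ?thesis
      by (simp add: s survival_absorbed lyapunov_nonneg)
  next
    case False
    have "ennreal (\<Sum>t<Suc N. survival t s)
        = 1 + (\<integral>\<^sup>+x. ennreal (\<Sum>t<N. survival t x) \<partial>ps_step rho q s)"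
      unfolding s using False by (intro ennreal_sum_survival_Suc) simp
    also have "\<dots> \<le> 1 + (\<integral>\<^sup>+x. ennreal (lyapunov x) \<partial>ps_step rho q s)"
      using Suc.IH by (intro add_mono nn_integral_mono ennreal_leI) auto
    also have "(\<integral>\<^sup>+x. ennreal (lyapunov x) \<partial>ps_step rho q s) = ennreal (step_mean lyapunov s)"
      unfolding s using False lyapunov_nonneg
      by (intro nn_integral_ps_step summable_geometric_weighted) auto
    also have "step_mean lyapunov s = lyapunov s - 1"
      unfolding s using False by (simp add: step_mean_lyapunov)
    also have "1 + ennreal (lyapunov s - 1) = ennreal (lyapunov s)"
    proof -
      have "1 * 1 \<le> lyapunov_slope * (real n + real b)"
        using False lyapunov_slope_ge_1 by (intro mult_mono) auto
      then show ?thesis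
        using ennreal_plus[of 1 "lyapunov s - 1"] by (simp add: s lyapunov_def)
    qed
    finally show ?thesis
      using lyapunov_nonneg by simp
  qed
qed
lemma summable_survival: "summable (\<lambda>t. survival t s)"
  by (rule summableI_nonneg_bounded[OF survival_nonneg sum_survival_le_lyapunov])

definition mean_steps :: "nat \<times> nat \<Rightarrow> real" where
  "mean_steps s = (\<Sum>t. survival t s)"

lemma mean_steps_nonneg: "0 \<le> mean_steps s"
  unfolding mean_steps_def by (rule suminf_nonneg[OF summable_survival survival_nonneg])

lemma mean_steps_le_lyapunov: "mean_steps s \<le> lyapunov s"
  unfolding mean_steps_def by (rule suminf_le_const[OF summable_survival sum_survival_le_lyapunov])

lemma mean_steps_absorbed: "mean_steps (m, 0) = 0"
  by (simp add: mean_steps_def survival_absorbed)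

lemma mean_steps_first_step:
  assumes "0 < b"
  shows "mean_steps (n, b) = 1 + step_mean mean_steps (n, b)"
proof -
  have summable_steps: "summable (\<lambda>c. (1 - q) * q ^ c * mean_steps (n + Suc c, b))"
    by (intro summable_geometric_weighted mean_steps_nonneg mean_steps_le_lyapunov)
  have summable: "summable (\<lambda>t. survival (Suc t) (n, b))"
    using summable_survival[of "(n, b)"] by (subst summable_Suc_iff)
  have "ennreal (\<Sum>t. survival (Suc t) (n, b)) = (\<Sum>t. ennreal (survival (Suc t) (n, b)))"
    using summable survival_nonneg by (intro suminf_ennreal2[symmetric]) auto
  also have "\<dots> = (\<integral>\<^sup>+x. (\<Sum>t. ennreal (survival t x)) \<partial>ps_step rho q (n, b))"
    by (simp add: ennreal_survival_Suc nn_integral_suminf)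
  also have "\<dots> = (\<integral>\<^sup>+x. ennreal (mean_steps x) \<partial>ps_step rho q (n, b))"
    unfolding mean_steps_def
    by (intro nn_integral_cong suminf_ennreal2) (auto simp: survival_nonneg summable_survival)
  also have "\<dots> = ennreal (step_mean mean_steps (n, b))"
    using assms mean_steps_nonneg summable_steps by (intro nn_integral_ps_step)
  finally have "(\<Sum>t. survival (Suc t) (n, b)) = step_mean mean_steps (n, b)"
    using survival_nonneg summable summable_steps mean_steps_nonneg q_pos q_less_1 rho_pos
    by (subst (asm) ennreal_inj)
      (auto intro!: suminf_nonneg add_nonneg_nonneg mult_nonneg_nonneg divide_nonneg_nonneg
        simp: step_mean_def)
  moreover have "mean_steps (n, b) = (\<Sum>t. survival (Suc t) (n, b)) + 1"
    unfolding mean_steps_def using suminf_split_head[OF summable_survival] assms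
    by (simp add: survival_def)
  ultimately show ?thesis
    by simp
qed

section \<open>Mean sojourn times\<close>

text \<open>\<open>sojourn\<close> and \<open>tail\<close> are the coefficient sequences \<open>T\<close> and \<open>A\<close> of \<open>- E1\<close> and \<open>- F1\<close>.\<close>

definition sojourn :: "nat \<times> nat \<Rightarrow> real" where
  "sojourn = (\<lambda>(n, b). mean_sojourn rho q n b)"

lemma sojourn_eq_mean_steps: "sojourn s = mean_steps s / (1 + rho)"
  using summable_survival[of s]
  by (cases s) (simp add: sojourn_def mean_sojourn_def mean_steps_def survival_def suminf_divide)

lemma sojourn_nonneg: "0 \<le> sojourn s"
  using mean_steps_nonneg rho_pos by (simp add: sojourn_eq_mean_steps)

lemma sojourn_absorbed: "sojourn (n, 0) = 0"
  by (simp add: sojourn_eq_mean_steps mean_steps_absorbed)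

lemma sojourn_le_lyapunov: "sojourn s \<le> lyapunov s"
proof -
  have "mean_steps s / (1 + rho) \<le> mean_steps s"
    using mean_steps_nonneg[of s] rho_pos by (simp add: divide_le_eq algebra_simps)
  then show ?thesis
    unfolding sojourn_eq_mean_steps using mean_steps_le_lyapunov[of s] by (rule order_trans)
qed

lemma sojourn_le: "sojourn (n, b) \<le> lyapunov_slope * ((real n + 1) * (real b + 1))"
proof -
  have "real n + real b \<le> (real n + 1) * (real b + 1)"
    by (simp add: algebra_simps)
  then have "lyapunov (n, b) \<le> lyapunov_slope * ((real n + 1) * (real b + 1))"
    unfolding lyapunov_def using lyapunov_slope_ge_1 by (simp add: mult_left_mono)
  then show ?thesis
    using sojourn_le_lyapunov[of "(n, b)"] by simp
qed

definition tail :: "nat \<times> nat \<Rightarrow> real" where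
  "tail = (\<lambda>(n, b). \<Sum>c. q ^ c * sojourn (n + Suc c, b))"

lemma summable_tail: "summable (\<lambda>c. q ^ c * sojourn (n + Suc c, b))"
proof -
  have "summable (\<lambda>c. 1 / (1 - q) * ((1 - q) * q ^ c * sojourn (n + Suc c, b)))"
    by (intro summable_mult summable_geometric_weighted sojourn_nonneg sojourn_le_lyapunov)
  then show ?thesis
    using q_less_1 by simp
qed

lemma tail_nonneg: "0 \<le> tail s"
  using summable_tail q_pos sojourn_nonneg
  by (cases s) (auto simp: tail_def intro!: suminf_nonneg)

lemma tail_absorbed: "tail (n, 0) = 0"
  by (simp add: tail_def sojourn_absorbed)

lemma tail_shift: "tail (n, b) = sojourn (Suc n, b) + q * tail (Suc n, b)"
  using suminf_split_head[OF summable_tail[of n b]] suminf_mult[OF summable_tail[of "Suc n" b], of q]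
  by (simp add: tail_def mult_ac)

lemma tail_le: "tail (n, b) \<le> lyapunov_slope / (1 - q)\<^sup>2 * ((real n + 1) * (real b + 1))"
proof -
  have "(\<lambda>c. lyapunov_slope / (1 - q) * ((1 - q) * q ^ c * (real (n + Suc c) + real b)))
      sums (lyapunov_slope / (1 - q) * (real n + real b + 1 / (1 - q)))"
    by (intro sums_mult geometric_linear_sums)
  moreover have "q ^ c * sojourn (n + Suc c, b)
      \<le> lyapunov_slope / (1 - q) * ((1 - q) * q ^ c * (real (n + Suc c) + real b))" for c
    using mult_left_mono[OF sojourn_le_lyapunov[of "(n + Suc c, b)"], of "q ^ c"] q_pos q_less_1
    by (simp add: lyapunov_def)
  ultimately have "tail (n, b) \<le> lyapunov_slope / (1 - q) * (real n + real b + 1 / (1 - q))"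
    unfolding tail_def prod.case by (intro sums_le[OF _ summable_sums[OF summable_tail]]) auto
  also have "\<dots> \<le> lyapunov_slope / (1 - q) * ((real n + 1) * (real b + 1) / (1 - q))"
  proof -
    have "real n + real b \<le> (real n + real b) / (1 - q)"
      using q_pos q_less_1 by (simp add: le_divide_eq mult_left_le)
    then have "real n + real b + 1 / (1 - q) \<le> (real n + real b + 1) / (1 - q)"
      by (simp add: add_divide_distrib)
    also have "\<dots> \<le> (real n + 1) * (real b + 1) / (1 - q)"
      using q_less_1 by (intro divide_right_mono) (auto simp: algebra_simps)
    finally show ?thesis
      using lyapunov_slope_ge_1 q_less_1 by (intro mult_left_mono) auto
  qed
  finally show ?thesis
    by (simp add: power2_eq_square)
qed

lemma sojourn_recurrence:
  assumes "0 < b"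
  shows "(1 + rho) * (real n + real b) * sojourn (n, b)
    = real n + real b + rho * (1 - q) * (real n + real b) * tail (n, b)
      + real b * sojourn (n, b - 1) + real n * sojourn (n - 1, b)"
proof -
  have steps: "mean_steps s = (1 + rho) * sojourn s" for s
    using rho_pos by (simp add: sojourn_eq_mean_steps)
  have "(\<Sum>c. (1 - q) * q ^ c * mean_steps (n + Suc c, b))
      = (\<Sum>c. (1 - q) * (1 + rho) * (q ^ c * sojourn (n + Suc c, b)))"
    by (simp only: steps mult_ac)
  also have "\<dots> = (1 - q) * (1 + rho) * tail (n, b)"
    unfolding tail_def prod.case by (rule suminf_mult[OF summable_tail])
  finally have arrivals: "(\<Sum>c. (1 - q) * q ^ c * mean_steps (n + Suc c, b)) = \<dots>" .
  have "(1 + rho) * sojourn (n, b) = 1 + rho / (1 + rho) * ((1 - q) * (1 + rho) * tail (n, b))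
      + 1 / (1 + rho) * (real b / real (n + b) * ((1 + rho) * sojourn (n, b - 1))
        + real n / real (n + b) * ((1 + rho) * sojourn (n - 1, b)))"
    using mean_steps_first_step[OF assms, of n, unfolded step_mean_def case_prod_conv arrivals,
        unfolded steps]
    by (simp only: add.assoc)
  also have "\<dots> = 1 + rho * (1 - q) * tail (n, b)
      + (real b * sojourn (n, b - 1) + real n * sojourn (n - 1, b)) / (real n + real b)"
    using rho_pos by (simp add: add_divide_distrib)
  finally show ?thesis
    using assms by (simp add: field_simps)
qed

lemma poly_bounded_sojourn: "poly_bounded sojourn"
  using sojourn_nonneg sojourn_le by (intro poly_boundedI[of _ lyapunov_slope 1]) simp

lemma poly_bounded_tail: "poly_bounded tail"
  using tail_nonneg tail_le by (intro poly_boundedI[of _ "lyapunov_slope / (1 - q)\<^sup>2" 1]) simp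

section \<open>The generating functions\<close>

text \<open>\<open>head\<close> supplies, in the column \<open>n = 0\<close>, the term \<open>A(-1, b)\<close> missing from
  \<open>T(n, b) = A(n - 1, b) - q A(n, b)\<close>; its generating function does not depend on \<open>u\<close>.\<close>

definition head :: "nat \<times> nat \<Rightarrow> real" where
  "head = (\<lambda>(n, b). if n = 0 then sojourn (0, b) + q * tail (0, b) else 0)"

lemma sojourn_decomposition: "sojourn = (\<lambda>x. shift_fst tail x + (- q) * tail x + head x)"
proof
  fix x :: "nat \<times> nat"
  obtain n b where x: "x = (n, b)"
    by fastforce
  show "sojourn x = shift_fst tail x + (- q) * tail x + head x"
    using tail_shift[of "n - 1" b] by (cases n) (simp_all add: x shift_fst_def head_def)
qed

lemma poly_bounded_head: "poly_bounded head"
proof (rule poly_boundedI[of _ "lyapunov_slope + lyapunov_slope / (1 - q)\<^sup>2" 1])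
  fix n b
  have "sojourn (0, b) + q * tail (0, b) \<le> sojourn (0, b) + tail (0, b)"
    using tail_nonneg[of "(0, b)"] q_pos q_less_1 by (simp add: mult_left_le_one_le)
  also have "\<dots> \<le> (lyapunov_slope + lyapunov_slope / (1 - q)\<^sup>2) * (real b + 1)"
    using sojourn_le[of 0 b] tail_le[of 0 b] by (simp add: algebra_simps)
  also have "\<dots> \<le> (lyapunov_slope + lyapunov_slope / (1 - q)\<^sup>2) * ((real n + 1) * (real b + 1))"
    using lyapunov_slope_ge_1 by (intro mult_left_mono) (auto simp: algebra_simps)
  finally have "sojourn (0, b) + q * tail (0, b)
      \<le> (lyapunov_slope + lyapunov_slope / (1 - q)\<^sup>2) * ((real n + 1) * (real b + 1))" .
  moreover have "0 \<le> (lyapunov_slope + lyapunov_slope / (1 - q)\<^sup>2) * ((real n + 1) * (real b + 1))"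
    using lyapunov_slope_ge_1 by simp
  ultimately show "\<bar>head (n, b)\<bar> \<le> (lyapunov_slope + lyapunov_slope / (1 - q)\<^sup>2) * ((real n + 1) * (real b + 1)) ^ 1"
    using sojourn_nonneg tail_nonneg q_pos by (auto simp: head_def)
qed

lemma gf_head_indep: "gf head u v = gf head w v"
proof -
  have "(\<lambda>(n, b). of_real (head (n, b)) * u ^ n * v ^ b) = (\<lambda>(n, b). of_real (head (n, b)) * w ^ n * v ^ b)"
    by (auto simp: fun_eq_iff head_def)
  then show ?thesis
    by (simp add: gf_def)
qed

lemma gf_sojourn_split:
  assumes "norm u < 1" "norm v < 1"
  shows "gf sojourn u v = (u - q) * gf tail u v + gf sojourn q v"
proof -
  have split: "gf sojourn w v = (w - q) * gf tail w v + gf head w v" if "norm w < 1" for w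
  proof (rule gf_eqI)
    have "has_gf (\<lambda>x. shift_fst tail x + (- q) * tail x + head x) w v
        (w * gf tail w v + of_real (- q) * gf tail w v + gf head w v)"
      using that assms(2)
      by (intro has_gf_add has_gf_scale has_gf_shift_fst has_gf_gf poly_bounded_tail poly_bounded_head)
    then have "has_gf sojourn w v (w * gf tail w v + of_real (- q) * gf tail w v + gf head w v)"
      by (simp only: sojourn_decomposition[symmetric])
    then show "has_gf sojourn w v ((w - q) * gf tail w v + gf head w v)"
      by (simp add: algebra_simps)
  qed
  show ?thesis
    using split[OF assms(1)] split[of q] q_pos q_less_1 gf_head_indep[of u v q] by simp
qed

lemma E1_eq_gf: "E1 rho q u v = - gf sojourn u v"
proof -
  have "(\<Sum>\<^sub>\<infinity>(n, b)\<in>UNIV \<times> {1..}. complex_of_real (mean_sojourn rho q n b) * u ^ n * v ^ b)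
      = (\<Sum>\<^sub>\<infinity>(n, b). of_real (sojourn (n, b)) * u ^ n * v ^ b)"
  proof (rule infsum_cong_neutral)
    fix x :: "nat \<times> nat"
    assume "x \<in> UNIV - UNIV \<times> {1..}"
    then obtain n where "x = (n, 0)"
      by (cases x) auto
    then show "(\<lambda>(n, b). of_real (sojourn (n, b)) * u ^ n * v ^ b) x = 0"
      by (simp add: sojourn_absorbed)
  qed (auto simp: sojourn_def)
  then show ?thesis
    by (simp add: E1_def gf_def)
qed

lemma E1v_eq_gf: "E1v rho q v = - gf sojourn q v"
  by (simp add: E1v_def E1_eq_gf)

lemma F1_eq_gf:
  assumes "norm u < 1" "norm v < 1"
  shows "F1 rho q u v = - gf tail u v"
proof (cases "u = q")
  case True
  have "((\<lambda>w. gf tail w v) has_field_derivative gf (deriv_fst tail) u v) (at u)"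
    by (rule has_field_derivative_gf_fst[OF poly_bounded_tail assms])
  then have "((\<lambda>w. - ((w - q) * gf tail w v + gf sojourn q v)) has_field_derivative
      - (1 * gf tail u v + (u - q) * gf (deriv_fst tail) u v)) (at u)"
    by (intro derivative_eq_intros) auto
  then have "((\<lambda>w. - ((w - q) * gf tail w v + gf sojourn q v)) has_field_derivative - gf tail u v) (at u)"
    using True by simp
  then have "((\<lambda>w. E1 rho q w v) has_field_derivative - gf tail u v) (at u)"
  proof (rule has_field_derivative_transform_within_open[where S = "ball 0 1"])
    fix w :: complex
    assume "w \<in> ball 0 1"
    then show "- ((w - q) * gf tail w v + gf sojourn q v) = E1 rho q w v"
      using gf_sojourn_split[of w v] assms by (simp add: E1_eq_gf)
  qed (use assms in auto)
  then show ?thesis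
    using True by (simp add: F1_def DERIV_imp_deriv)
next
  case False
  then show ?thesis
    using gf_sojourn_split[OF assms] by (simp add: F1_def E1_eq_gf)
qed

lemma norm_q_less_1: "norm (complex_of_real q) < 1"
  using q_pos q_less_1 by simp

lemma euler_fst_F1:
  assumes "norm u < 1" "norm v < 1"
  shows "u * deriv (\<lambda>w. F1 rho q w v) u = - gf (euler_fst tail) u v"
proof -
  have "deriv (\<lambda>w. F1 rho q w v) u = - deriv (\<lambda>w. gf tail w v) u"
    using assms F1_eq_gf
    by (intro deriv_eq_neg_on_unit_disc gf_field_differentiable_fst poly_bounded_tail) auto
  then show ?thesis
    using euler_fst_gf[OF poly_bounded_tail assms] by simp
qed

lemma euler_snd_F1:
  assumes "norm u < 1" "norm v < 1"
  shows "v * deriv (\<lambda>w. F1 rho q u w) v = - gf (euler_snd tail) u v"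
proof -
  have "deriv (\<lambda>w. F1 rho q u w) v = - deriv (\<lambda>w. gf tail u w) v"
    using assms F1_eq_gf
    by (intro deriv_eq_neg_on_unit_disc gf_field_differentiable_snd poly_bounded_tail) auto
  then show ?thesis
    using euler_snd_gf[OF poly_bounded_tail assms] by simp
qed

lemma euler_snd_E1v:
  assumes "norm v < 1"
  shows "v * deriv (E1v rho q) v = - gf (euler_snd sojourn) q v"
proof -
  have "deriv (E1v rho q) v = - deriv (\<lambda>w. gf sojourn q w) v"
    using gf_field_differentiable_snd[OF poly_bounded_sojourn norm_q_less_1 assms]
    by (simp add: E1v_eq_gf[abs_def])
  then show ?thesis
    using euler_snd_gf[OF poly_bounded_sojourn norm_q_less_1 assms] by simp
qed

lemma euler_fst_sojourn:
  assumes "norm u < 1" "norm v < 1"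
  shows "gf (euler_fst sojourn) u v = u * gf tail u v + (u - q) * gf (euler_fst tail) u v"
proof -
  define D where "D = deriv (\<lambda>w. gf tail w v) u"
  have "((\<lambda>w. gf tail w v) has_field_derivative D) (at u)"
    unfolding D_def using gf_field_differentiable_fst[OF poly_bounded_tail assms]
    by (simp add: DERIV_deriv_iff_field_differentiable)
  from DERIV_add[OF DERIV_mult[OF DERIV_diff[OF DERIV_ident DERIV_const[where k = "of_real q"]] this]
      DERIV_const[where k = "gf sojourn q v"]]
  have "((\<lambda>w. (w - q) * gf tail w v + gf sojourn q v) has_field_derivative
      gf tail u v + (u - q) * D) (at u)"
    by (simp add: algebra_simps)
  then have "((\<lambda>w. gf sojourn w v) has_field_derivative gf tail u v + (u - q) * D) (at u)"
  proof (rule has_field_derivative_transform_within_open[where S = "ball 0 1"])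
    fix w :: complex
    assume "w \<in> ball 0 1"
    then show "(w - q) * gf tail w v + gf sojourn q v = gf sojourn w v"
      using gf_sojourn_split[of w v] assms by simp
  qed (use assms in auto)
  then show ?thesis
    using euler_fst_gf[OF poly_bounded_sojourn assms] euler_fst_gf[OF poly_bounded_tail assms]
    by (simp add: DERIV_imp_deriv D_def algebra_simps)
qed

lemma euler_snd_sojourn:
  assumes "norm u < 1" "norm v < 1"
  shows "gf (euler_snd sojourn) u v = (u - q) * gf (euler_snd tail) u v + gf (euler_snd sojourn) q v"
proof -
  define D1 D2 where "D1 = deriv (\<lambda>w. gf tail u w) v" and "D2 = deriv (\<lambda>w. gf sojourn q w) v"
  have "((\<lambda>w. gf tail u w) has_field_derivative D1) (at v)"
    unfolding D1_def using gf_field_differentiable_snd[OF poly_bounded_tail assms]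
    by (simp add: DERIV_deriv_iff_field_differentiable)
  moreover have "((\<lambda>w. gf sojourn q w) has_field_derivative D2) (at v)"
    unfolding D2_def using gf_field_differentiable_snd[OF poly_bounded_sojourn norm_q_less_1 assms(2)]
    by (simp add: DERIV_deriv_iff_field_differentiable)
  ultimately have "((\<lambda>w. (u - q) * gf tail u w + gf sojourn q w) has_field_derivative
      (u - q) * D1 + D2) (at v)"
    by (intro DERIV_add DERIV_cmult)
  then have "((\<lambda>w. gf sojourn u w) has_field_derivative (u - q) * D1 + D2) (at v)"
  proof (rule has_field_derivative_transform_within_open[where S = "ball 0 1"])
    fix w :: complex
    assume "w \<in> ball 0 1"
    then show "(u - q) * gf tail u w + gf sojourn q w = gf sojourn u w"
      using gf_sojourn_split[of u w] assms by simp
  qed (use assms in auto)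
  then show ?thesis
    using euler_snd_gf[OF poly_bounded_sojourn assms] euler_snd_gf[OF poly_bounded_tail assms]
      euler_snd_gf[OF poly_bounded_sojourn norm_q_less_1 assms(2)]
    by (simp add: DERIV_imp_deriv D1_def D2_def algebra_simps)
qed

lemma sojourn_recurrence_coeffs:
  "(1 + rho) * euler_fst sojourn (j, b) + (1 + rho) * euler_snd sojourn (j, b)
   = (if b = 0 then 0 else real j + real b)
     + rho * (1 - q) * euler_fst tail (j, b) + rho * (1 - q) * euler_snd tail (j, b)
     + (shift_fst (euler_fst sojourn) (j, b) + shift_fst sojourn (j, b))
     + (shift_snd (euler_snd sojourn) (j, b) + shift_snd sojourn (j, b))"
proof -
  have "shift_fst (euler_fst sojourn) (j, b) + shift_fst sojourn (j, b) = real j * sojourn (j - 1, b)"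
    by (cases j) (simp_all add: shift_fst_def euler_fst_def algebra_simps)
  moreover have "shift_snd (euler_snd sojourn) (j, b) + shift_snd sojourn (j, b)
      = real b * sojourn (j, b - 1)"
    by (cases b) (simp_all add: shift_snd_def euler_snd_def algebra_simps)
  ultimately show ?thesis
    using sojourn_recurrence[of b j]
    by (cases "b = 0") (simp_all add: euler_fst_def euler_snd_def sojourn_absorbed tail_absorbed
        algebra_simps)
qed

lemma gf_sojourn_recurrence:
  assumes "norm u < 1" "norm v < 1"
  shows "(1 + rho) * (gf (euler_fst sojourn) u v + gf (euler_snd sojourn) u v)
    = - L10 u v + rho * (1 - q) * (gf (euler_fst tail) u v + gf (euler_snd tail) u v)
      + u * (gf (euler_fst sojourn) u v + gf sojourn u v)
      + v * (gf (euler_snd sojourn) u v + gf sojourn u v)"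
proof -
  have pb: "poly_bounded sojourn" "poly_bounded tail" "poly_bounded (euler_fst sojourn)"
    "poly_bounded (euler_snd sojourn)" "poly_bounded (euler_fst tail)" "poly_bounded (euler_snd tail)"
    by (intro poly_bounded_sojourn poly_bounded_tail poly_bounded_euler_fst poly_bounded_euler_snd)+
  have "has_gf (\<lambda>x. (1 + rho) * euler_fst sojourn x + (1 + rho) * euler_snd sojourn x) u v
      (of_real (1 + rho) * gf (euler_fst sojourn) u v + of_real (1 + rho) * gf (euler_snd sojourn) u v)"
    using pb assms by (intro has_gf_add has_gf_scale has_gf_gf)
  moreover have "has_gf (\<lambda>x. (\<lambda>(j, b). if b = 0 then 0 else real j + real b) x
        + rho * (1 - q) * euler_fst tail x + rho * (1 - q) * euler_snd tail x
        + (shift_fst (euler_fst sojourn) x + shift_fst sojourn x)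
        + (shift_snd (euler_snd sojourn) x + shift_snd sojourn x)) u v
      (- L10 u v + of_real (rho * (1 - q)) * gf (euler_fst tail) u v
        + of_real (rho * (1 - q)) * gf (euler_snd tail) u v
        + (u * gf (euler_fst sojourn) u v + u * gf sojourn u v)
        + (v * gf (euler_snd sojourn) u v + v * gf sojourn u v))"
    using pb assms
    by (intro has_gf_add has_gf_scale has_gf_shift_fst has_gf_shift_snd has_gf_gf has_gf_L10)
  moreover have "(\<lambda>x. (1 + rho) * euler_fst sojourn x + (1 + rho) * euler_snd sojourn x)
      = (\<lambda>x. (\<lambda>(j, b). if b = 0 then 0 else real j + real b) x
        + rho * (1 - q) * euler_fst tail x + rho * (1 - q) * euler_snd tail x
        + (shift_fst (euler_fst sojourn) x + shift_fst sojourn x)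
        + (shift_snd (euler_snd sojourn) x + shift_snd sojourn x))"
    using sojourn_recurrence_coeffs by (auto simp only: case_prod_conv split: prod.split)
  ultimately show ?thesis
    by (auto dest: has_gf_unique simp: algebra_simps)
qed

lemma F1_pde:
  assumes "norm u < 1" "norm v < 1"
  shows "u * P0 rho q u * deriv (\<lambda>w. F1 rho q w v) u
       + v * (complex_of_real (rho * (1 - q)) - (1 + complex_of_real rho - v) * (u - complex_of_real q))
           * deriv (\<lambda>w. F1 rho q u w) v
       + (u * (u - 1 - complex_of_real rho) + (u - complex_of_real q) * (u + v)) * F1 rho q u v
       + L1 rho q u v = 0"
proof -
  have "u * P0 rho q u * deriv (\<lambda>w. F1 rho q w v) u
       + v * (complex_of_real (rho * (1 - q)) - (1 + complex_of_real rho - v) * (u - complex_of_real q))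
           * deriv (\<lambda>w. F1 rho q u w) v
       + (u * (u - 1 - complex_of_real rho) + (u - complex_of_real q) * (u + v)) * F1 rho q u v
       + L1 rho q u v
     = P0 rho q u * (u * deriv (\<lambda>w. F1 rho q w v) u)
       + (complex_of_real (rho * (1 - q)) - (1 + complex_of_real rho - v) * (u - complex_of_real q))
           * (v * deriv (\<lambda>w. F1 rho q u w) v)
       + (u * (u - 1 - complex_of_real rho) + (u - complex_of_real q) * (u + v)) * F1 rho q u v
       + L10 u v + (u + v) * E1v rho q v - (1 + complex_of_real rho - v) * (v * deriv (E1v rho q) v)"
    unfolding L1_def by (simp add: algebra_simps)
  also have "\<dots> = 0"
    \<comment> \<open>\<open>gf_sojourn_recurrence\<close> with the generating functions of \<open>sojourn\<close> rewritten
      through those of \<open>tail\<close> by \<open>gf_sojourn_split\<close> and its derivatives\<close>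
    using euler_fst_F1[OF assms] euler_snd_F1[OF assms] F1_eq_gf[OF assms] E1v_eq_gf[of v]
      euler_snd_E1v[OF assms(2)] gf_sojourn_recurrence[OF assms] gf_sojourn_split[OF assms]
      euler_fst_sojourn[OF assms] euler_snd_sojourn[OF assms]
    unfolding P0_def by simp algebra
  finally show ?thesis .
qed

end

theorem mainTheorem12:
  fixes rho q :: real and u v :: complex
  assumes "0 < rho" and "0 < q" and "q < 1" and "rho + q < 1"
    and "norm u < 1" and "norm v < 1"
  shows "u * P0 rho q u * deriv (\<lambda>w. F1 rho q w v) u
       + v * (complex_of_real (rho * (1 - q)) - (1 + complex_of_real rho - v) * (u - complex_of_real q))
           * deriv (\<lambda>w. F1 rho q u w) v
       + (u * (u - 1 - complex_of_real rho) + (u - complex_of_real q) * (u + v)) * F1 rho q u v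
       + L1 rho q u v = 0
     \<and> (\<lambda>b. k1 (Suc b) u * v ^ Suc b) sums L10 u v"
proof -
  interpret ps_queue rho q
    using assms(1-4) by unfold_locales
  show ?thesis
    using F1_pde[OF assms(5,6)] L10_sums[OF assms(5,6)] by simp
qed

end
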